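(* Let $S$ be a quasi-adequate semigroup with an admissible adequate transversal $S^0$. Then for all $x,y\in S$, $e_{xy}=e_x\,e_{\overline{x}f_xe_y\overline{y}}$ and $f_{xy}=f_{\overline{x}f_xe_y\overline{y}}\,f_y$.
   Context: For a semigroup $S$, $S^1$ is $S$ with an identity adjoined, $\mathcal{L},\mathcal{R}$ Green's relations. $\mathcal{R}^\ast=\{(a,b):\forall x,y\in S^1,\ xa=ya\iff xb=yb\}$, $\mathcal{L}^\ast=\{(a,b):\forall x,y\in S^1,\ ax=ay\iff bx=by\}$. $S$ is abundant if each $\mathcal{R}^\ast$- and $\mathcal{L}^\ast$-class contains an idempotent; adequate if also idempotents commute (then $a^+$, $a^\ast$ are the unique idempotents $\mathcal{R}^\ast$-, resp. $\mathcal{L}^\ast$-related to $a$). Quasi-adequate: abundant with the idempotents forming a subsemigroup. An abundant subsemigroup $U$ of abundant $S$ is a $\ast$-subsemigroup if $\mathcal{L}^\ast(U)=\mathcal{L}^\ast(S)\cap(U\times U)$, $\mathcal{R}^\ast(U)=\mathcal{R}^\ast(S)\cap(U\times U)$. An adequate $\ast$-subsemigroup $S^0$ of abundant $S$ is an adequate transversal if each $x\in S$ has a unique $\overline{x}\in S^0$ and idempotents $e,f$ of $S$ with $x=e\overline{x}f$, $e\,\mathcal{L}\,\overline{x}^+$, $f\,\mathcal{R}\,\overline{x}^\ast$; these are unique and written $e_x:=e$, $f_x:=f$. It is admissible if $\overline{xy}=\overline{x}\,\overline{y}$ for all $x,y\in S$. *)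

theory Defs
  imports Main
begin

text \<open>The semigroup S is the whole carrier of a type of class semigroup_mult.
  Elements of S^1 (for a subsemigroup U: of U^1) are modelled as options,
  None being the adjoined identity.\<close>

definition in1 :: "'a set \<Rightarrow> 'a option \<Rightarrow> bool" where
  "in1 U x = (case x of None \<Rightarrow> True | Some z \<Rightarrow> z \<in> U)"

definition lmul :: "'a option \<Rightarrow> 'a \<Rightarrow> 'a::semigroup_mult" where
  "lmul x a = (case x of None \<Rightarrow> a | Some z \<Rightarrow> z * a)"

definition rmul :: "'a::semigroup_mult \<Rightarrow> 'a option \<Rightarrow> 'a" where
  "rmul a x = (case x of None \<Rightarrow> a | Some z \<Rightarrow> a * z)"

definition idem :: "'a::semigroup_mult \<Rightarrow> bool" where
  "idem e \<longleftrightarrow> e * e = e"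

definition greenL :: "'a::semigroup_mult \<Rightarrow> 'a \<Rightarrow> bool" where
  "greenL a b \<longleftrightarrow> (\<exists>x. lmul x a = b) \<and> (\<exists>y. lmul y b = a)"

definition greenR :: "'a::semigroup_mult \<Rightarrow> 'a \<Rightarrow> bool" where
  "greenR a b \<longleftrightarrow> (\<exists>x. rmul a x = b) \<and> (\<exists>y. rmul b y = a)"

definition Rstar_in :: "'a set \<Rightarrow> 'a::semigroup_mult \<Rightarrow> 'a \<Rightarrow> bool" where
  "Rstar_in U a b \<longleftrightarrow> (\<forall>x y. in1 U x \<longrightarrow> in1 U y \<longrightarrow>
      (lmul x a = lmul y a \<longleftrightarrow> lmul x b = lmul y b))"

definition Lstar_in :: "'a set \<Rightarrow> 'a::semigroup_mult \<Rightarrow> 'a \<Rightarrow> bool" where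
  "Lstar_in U a b \<longleftrightarrow> (\<forall>x y. in1 U x \<longrightarrow> in1 U y \<longrightarrow>
      (rmul a x = rmul a y \<longleftrightarrow> rmul b x = rmul b y))"

definition subsemigroup :: "'a::semigroup_mult set \<Rightarrow> bool" where
  "subsemigroup U \<longleftrightarrow> (\<forall>a\<in>U. \<forall>b\<in>U. a * b \<in> U)"

definition abundant_in :: "'a::semigroup_mult set \<Rightarrow> bool" where
  "abundant_in U \<longleftrightarrow> subsemigroup U \<and>
     (\<forall>a\<in>U. (\<exists>e\<in>U. idem e \<and> Rstar_in U a e) \<and> (\<exists>e\<in>U. idem e \<and> Lstar_in U a e))"

definition adequate_in :: "'a::semigroup_mult set \<Rightarrow> bool" where
  "adequate_in U \<longleftrightarrow> abundant_in U \<and>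
     (\<forall>e\<in>U. \<forall>f\<in>U. idem e \<longrightarrow> idem f \<longrightarrow> e * f = f * e)"

definition quasi_adequate :: "'a::semigroup_mult itself \<Rightarrow> bool" where
  "quasi_adequate _ \<longleftrightarrow> abundant_in (UNIV :: 'a set) \<and>
     (\<forall>e f :: 'a. idem e \<longrightarrow> idem f \<longrightarrow> idem (e * f))"

definition star_subsemigroup :: "'a::semigroup_mult set \<Rightarrow> bool" where
  "star_subsemigroup U \<longleftrightarrow> abundant_in U \<and>
     (\<forall>a\<in>U. \<forall>b\<in>U. (Lstar_in U a b \<longleftrightarrow> Lstar_in UNIV a b) \<and>
                   (Rstar_in U a b \<longleftrightarrow> Rstar_in UNIV a b))"

definition plus_in :: "'a set \<Rightarrow> 'a::semigroup_mult \<Rightarrow> 'a" where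
  "plus_in U a = (THE e. e \<in> U \<and> idem e \<and> Rstar_in U a e)"

definition ast_in :: "'a set \<Rightarrow> 'a::semigroup_mult \<Rightarrow> 'a" where
  "ast_in U a = (THE e. e \<in> U \<and> idem e \<and> Lstar_in U a e)"

definition is_decomp :: "'a::semigroup_mult set \<Rightarrow> 'a \<Rightarrow> 'a \<times> 'a \<times> 'a \<Rightarrow> bool" where
  "is_decomp S0 x t \<longleftrightarrow> (case t of (xb, e, f) \<Rightarrow>
     xb \<in> S0 \<and> idem e \<and> idem f \<and> x = e * xb * f \<and>
     greenL e (plus_in S0 xb) \<and> greenR f (ast_in S0 xb))"

definition adequate_transversal :: "'a::semigroup_mult set \<Rightarrow> bool" where
  "adequate_transversal S0 \<longleftrightarrow> adequate_in S0 \<and> star_subsemigroup S0 \<and>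
     (\<forall>x. \<exists>!t. is_decomp S0 x t)"

definition decomp :: "'a::semigroup_mult set \<Rightarrow> 'a \<Rightarrow> 'a \<times> 'a \<times> 'a" where
  "decomp S0 x = (THE t. is_decomp S0 x t)"

definition bar :: "'a::semigroup_mult set \<Rightarrow> 'a \<Rightarrow> 'a" where
  "bar S0 x = fst (decomp S0 x)"

definition ex :: "'a::semigroup_mult set \<Rightarrow> 'a \<Rightarrow> 'a" where
  "ex S0 x = fst (snd (decomp S0 x))"

definition fx :: "'a::semigroup_mult set \<Rightarrow> 'a \<Rightarrow> 'a" where
  "fx S0 x = snd (snd (decomp S0 x))"

definition admissible :: "'a::semigroup_mult set \<Rightarrow> bool" where
  "admissible S0 \<longleftrightarrow> (\<forall>x y. bar S0 (x * y) = bar S0 x * bar S0 y)"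

end

theory Submission
  imports Defs
begin

text \<open>Write \<open>u = \<overline>x f\<^sub>x e\<^sub>y \<overline>y\<close>. Substituting the decompositions of \<open>x\<close>, \<open>y\<close> and \<open>u\<close> gives
  \<open>xy = e\<^sub>x u f\<^sub>y = (e\<^sub>x e\<^sub>u) \<overline>u (f\<^sub>u f\<^sub>y)\<close>, and \<open>e\<^sub>x e\<^sub>u\<close>, \<open>f\<^sub>u f\<^sub>y\<close> are idempotents because the
  idempotents form a band. It remains to see \<open>e\<^sub>x e\<^sub>u \<L> \<overline>u\<^sup>+\<close> and \<open>f\<^sub>u f\<^sub>y \<R> \<overline>u\<^sup>*\<close>; then uniqueness
  of the decomposition of \<open>xy\<close> yields both formulas. Since \<open>\<overline>x\<^sup>+\<close> is a left identity of \<open>u\<close> and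
  \<open>\<overline>u = \<overline>u\<^sup>+ u \<overline>u\<^sup>*\<close>, commutativity of idempotents in \<open>S\<^sup>0\<close> makes it a left identity of
  \<open>\<overline>u\<close>, hence (by \<open>\<R>\<^sup>*\<close>) \<open>\<overline>u\<^sup>+ \<le> \<overline>x\<^sup>+\<close>; combined with \<open>e\<^sub>x \<L> \<overline>x\<^sup>+\<close> and \<open>e\<^sub>u \<L> \<overline>u\<^sup>+\<close> this
  gives the \<open>\<L>\<close>-relation, and dually for \<open>\<R>\<close>.\<close>

lemma Rstar_in_left_identity_iff:
  "Rstar_in U a b \<Longrightarrow> g \<in> U \<Longrightarrow> g * a = a \<longleftrightarrow> g * b = b"
  unfolding Rstar_in_def
  by (drule spec[of _ "Some g"], drule spec[of _ None]) (simp add: in1_def lmul_def)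

lemma Lstar_in_right_identity_iff:
  "Lstar_in U a b \<Longrightarrow> g \<in> U \<Longrightarrow> a * g = a \<longleftrightarrow> b * g = b"
  unfolding Lstar_in_def
  by (drule spec[of _ "Some g"], drule spec[of _ None]) (simp add: in1_def rmul_def)

lemma Rstar_in_idem_left_identity:
  "Rstar_in U a e \<Longrightarrow> e \<in> U \<Longrightarrow> idem e \<Longrightarrow> e * a = a"
  using Rstar_in_left_identity_iff unfolding idem_def by blast

lemma Lstar_in_idem_right_identity:
  "Lstar_in U a e \<Longrightarrow> e \<in> U \<Longrightarrow> idem e \<Longrightarrow> a * e = a"
  using Lstar_in_right_identity_iff unfolding idem_def by blast

lemma abundant_in_Rstar_idem:
  "abundant_in U \<Longrightarrow> a \<in> U \<Longrightarrow> \<exists>e\<in>U. idem e \<and> Rstar_in U a e"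
  unfolding abundant_in_def by simp

lemma abundant_in_Lstar_idem:
  "abundant_in U \<Longrightarrow> a \<in> U \<Longrightarrow> \<exists>e\<in>U. idem e \<and> Lstar_in U a e"
  unfolding abundant_in_def by simp

lemma adequate_in_idem_commute:
  "adequate_in U \<Longrightarrow> e \<in> U \<Longrightarrow> f \<in> U \<Longrightarrow> idem e \<Longrightarrow> idem f \<Longrightarrow> e * f = f * e"
  unfolding adequate_in_def by simp

lemma plus_in_props:
  assumes "adequate_in U" "a \<in> U"
  shows "plus_in U a \<in> U \<and> idem (plus_in U a) \<and> Rstar_in U a (plus_in U a)"
proof -
  have "abundant_in U"
    using assms(1) unfolding adequate_in_def by simp
  then obtain e where e: "e \<in> U" "idem e" "Rstar_in U a e"
    using abundant_in_Rstar_idem assms(2) by blast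
  have "e' = e" if e': "e' \<in> U" "idem e'" "Rstar_in U a e'" for e'
  proof -
    have "e * e' = e'" "e' * e = e"
      using Rstar_in_left_identity_iff[OF e'(3) e(1)] Rstar_in_left_identity_iff[OF e(3) e'(1)]
        Rstar_in_idem_left_identity[OF e(3,1,2)] Rstar_in_idem_left_identity[OF e'(3,1,2)]
      by blast+
    moreover have "e * e' = e' * e"
      using adequate_in_idem_commute[OF assms(1) e(1) e'(1) e(2) e'(2)] .
    ultimately show "e' = e" by metis
  qed
  then have "plus_in U a = e"
    unfolding plus_in_def using e by (intro the_equality) blast+
  with e show ?thesis by simp
qed

lemma ast_in_props:
  assumes "adequate_in U" "a \<in> U"
  shows "ast_in U a \<in> U \<and> idem (ast_in U a) \<and> Lstar_in U a (ast_in U a)"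
proof -
  have "abundant_in U"
    using assms(1) unfolding adequate_in_def by simp
  then obtain e where e: "e \<in> U" "idem e" "Lstar_in U a e"
    using abundant_in_Lstar_idem assms(2) by blast
  have "e' = e" if e': "e' \<in> U" "idem e'" "Lstar_in U a e'" for e'
  proof -
    have "e' * e = e'" "e * e' = e"
      using Lstar_in_right_identity_iff[OF e'(3) e(1)] Lstar_in_right_identity_iff[OF e(3) e'(1)]
        Lstar_in_idem_right_identity[OF e(3,1,2)] Lstar_in_idem_right_identity[OF e'(3,1,2)]
      by blast+
    moreover have "e * e' = e' * e"
      using adequate_in_idem_commute[OF assms(1) e(1) e'(1) e(2) e'(2)] .
    ultimately show "e' = e" by metis
  qed
  then have "ast_in U a = e"
    unfolding ast_in_def using e by (intro the_equality) blast+
  with e show ?thesis by simp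
qed

lemma plus_in_mult_self:
  "adequate_in U \<Longrightarrow> a \<in> U \<Longrightarrow> plus_in U a * a = a"
  using plus_in_props Rstar_in_idem_left_identity by blast

lemma mult_ast_in_self:
  "adequate_in U \<Longrightarrow> a \<in> U \<Longrightarrow> a * ast_in U a = a"
  using ast_in_props Lstar_in_idem_right_identity by blast

lemma lmul_mult_assoc: "lmul x (a * b) = lmul x a * b"
  by (cases x) (simp_all add: lmul_def mult.assoc)

lemma rmul_mult_assoc: "rmul (a * b) x = a * rmul b x"
  by (cases x) (simp_all add: rmul_def mult.assoc)

lemma greenL_idem_absorb:
  assumes "idem e" "idem p" "greenL e p"
  shows "p * e = p" "e * p = e"
proof -
  obtain x y where "lmul x e = p" "lmul y p = e"
    using assms(3) greenL_def by blast
  then show "p * e = p" "e * p = e"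
    using assms(1,2) lmul_mult_assoc by (metis idem_def)+
qed

lemma greenR_idem_absorb:
  assumes "idem f" "idem p" "greenR f p"
  shows "f * p = p" "p * f = f"
proof -
  obtain x y where "rmul f x = p" "rmul p y = f"
    using assms(3) greenR_def by blast
  then show "f * p = p" "p * f = f"
    using assms(1,2) rmul_mult_assoc by (metis idem_def)+
qed

lemma greenL_mult_idem:
  assumes "idem e" "idem p" "greenL e p" "idem e'" "idem q" "greenL e' q" "q * p = q"
  shows "greenL (e * e') q"
proof -
  note L = greenL_idem_absorb[OF assms(1-3)] greenL_idem_absorb[OF assms(4-6)]
  have "q * (e * e') = q"
    by (metis L assms(7) mult.assoc)
  moreover have "e * e' * q = e * e'"
    by (simp add: L mult.assoc)
  ultimately show ?thesis
    unfolding greenL_def by (metis lmul_def option.case(2))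
qed

lemma greenR_mult_idem:
  assumes "idem f" "idem p" "greenR f p" "idem f'" "idem q" "greenR f' q" "p * q = q"
  shows "greenR (f' * f) q"
proof -
  note R = greenR_idem_absorb[OF assms(1-3)] greenR_idem_absorb[OF assms(4-6)]
  have "f' * f * q = q"
    by (metis R assms(7) mult.assoc)
  moreover have "q * (f' * f) = f' * f"
    by (simp add: R flip: mult.assoc)
  ultimately show ?thesis
    unfolding greenR_def by (metis rmul_def option.case(2))
qed

lemma is_decomp_decomp:
  "adequate_transversal S0 \<Longrightarrow> is_decomp S0 z (bar S0 z, ex S0 z, fx S0 z)"
  unfolding adequate_transversal_def bar_def ex_def fx_def decomp_def
  by (metis prod.collapse theI')

lemma decomp_eqI:
  "adequate_transversal S0 \<Longrightarrow> is_decomp S0 z t \<Longrightarrow> decomp S0 z = t"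
  unfolding adequate_transversal_def decomp_def by (metis the1_equality)

lemma is_decomp_bar_eq:
  assumes "adequate_in S0" "is_decomp S0 u (ub, e, f)"
  shows "ub = plus_in S0 ub * u * ast_in S0 ub"
proof -
  have ub: "ub \<in> S0" "idem e" "idem f" "u = e * ub * f"
    "greenL e (plus_in S0 ub)" "greenR f (ast_in S0 ub)"
    using assms(2) unfolding is_decomp_def by auto
  have "idem (plus_in S0 ub)" "idem (ast_in S0 ub)"
    using plus_in_props ast_in_props assms(1) ub(1) by blast+
  then have "plus_in S0 ub * e = plus_in S0 ub" "f * ast_in S0 ub = ast_in S0 ub"
    using greenL_idem_absorb greenR_idem_absorb ub by blast+
  then have "plus_in S0 ub * u * ast_in S0 ub = plus_in S0 ub * ub * ast_in S0 ub"
    using ub(4) by (metis mult.assoc)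
  then show ?thesis
    using plus_in_mult_self[OF assms(1) ub(1)] mult_ast_in_self[OF assms(1) ub(1)] by simp
qed

lemma is_decomp_left_identity:
  assumes "adequate_in S0" "is_decomp S0 u (ub, e, f)"
    and "g \<in> S0" "idem g" "g * u = u"
  shows "g * plus_in S0 ub = plus_in S0 ub"
proof -
  let ?p = "plus_in S0 ub" and ?a = "ast_in S0 ub"
  have ub: "ub \<in> S0" using assms(2) unfolding is_decomp_def by simp
  note p = plus_in_props[OF assms(1) ub]
  have "g * ub = ?p * (g * u) * ?a"
    using is_decomp_bar_eq[OF assms(1,2)]
      adequate_in_idem_commute[OF assms(1,3) _ assms(4), of ?p] p
    by (metis mult.assoc)
  then have "g * ub = ub"
    using assms(5) is_decomp_bar_eq[OF assms(1,2)] by simp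
  then show ?thesis
    using p Rstar_in_left_identity_iff assms(3) by blast
qed

lemma is_decomp_right_identity:
  assumes "adequate_in S0" "is_decomp S0 u (ub, e, f)"
    and "g \<in> S0" "idem g" "u * g = u"
  shows "ast_in S0 ub * g = ast_in S0 ub"
proof -
  let ?p = "plus_in S0 ub" and ?a = "ast_in S0 ub"
  have ub: "ub \<in> S0" using assms(2) unfolding is_decomp_def by simp
  note a = ast_in_props[OF assms(1) ub]
  have "ub * g = ?p * (u * g) * ?a"
    using is_decomp_bar_eq[OF assms(1,2)]
      adequate_in_idem_commute[OF assms(1,3) _ assms(4), of ?a] a
    by (metis mult.assoc)
  then have "ub * g = ub"
    using assms(5) is_decomp_bar_eq[OF assms(1,2)] by simp
  then show ?thesis
    using a Lstar_in_right_identity_iff assms(3) by blast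
qed

lemma is_decomp_mult:
  fixes x y :: "'a::semigroup_mult"
  assumes band: "\<And>g h :: 'a. idem g \<Longrightarrow> idem h \<Longrightarrow> idem (g * h)"
    and adq: "adequate_in S0"
    and x: "is_decomp S0 x (xb, e1, f1)"
    and y: "is_decomp S0 y (yb, e2, f2)"
    and u: "is_decomp S0 (xb * f1 * e2 * yb) (ub, eu, fu)"
  shows "is_decomp S0 (x * y) (ub, e1 * eu, fu * f2)"
proof -
  define u' where "u' = xb * f1 * e2 * yb"
  let ?xp = "plus_in S0 xb" and ?ya = "ast_in S0 yb"
  let ?up = "plus_in S0 ub" and ?ua = "ast_in S0 ub"
  have xb: "xb \<in> S0" "idem e1" "x = e1 * xb * f1" "greenL e1 ?xp"
    using x unfolding is_decomp_def by auto
  have yb: "yb \<in> S0" "idem f2" "y = e2 * yb * f2" "greenR f2 ?ya"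
    using y unfolding is_decomp_def by auto
  have ub: "ub \<in> S0" "idem eu" "idem fu" "u' = eu * ub * fu"
    "greenL eu ?up" "greenR fu ?ua"
    using u unfolding is_decomp_def u'_def by auto
  note xp = plus_in_props[OF adq xb(1)] and ya = ast_in_props[OF adq yb(1)]
  note up = plus_in_props[OF adq ub(1)] and ua = ast_in_props[OF adq ub(1)]
  have "?xp * u' = u'"
    unfolding u'_def by (simp add: plus_in_mult_self[OF adq xb(1)] flip: mult.assoc)
  moreover have "u' * ?ya = u'"
    unfolding u'_def by (simp add: mult_ast_in_self[OF adq yb(1)] mult.assoc)
  ultimately have "?xp * ?up = ?up" "?ua * ?ya = ?ua"
    using is_decomp_left_identity[OF adq u[folded u'_def]]
      is_decomp_right_identity[OF adq u[folded u'_def]] xp ya by blast+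
  then have "?up * ?xp = ?up" "?ya * ?ua = ?ua"
    using adequate_in_idem_commute[OF adq] xp ya up ua by metis+
  then have "greenL (e1 * eu) ?up" "greenR (fu * f2) ?ua"
    using greenL_mult_idem[OF xb(2) _ xb(4) ub(2) _ ub(5)]
      greenR_mult_idem[OF yb(2) _ yb(4) ub(3) _ ub(6)] xp ya up ua by blast+
  moreover have "x * y = (e1 * eu) * ub * (fu * f2)"
  proof -
    have "x * y = e1 * u' * f2"
      using xb(3) yb(3) unfolding u'_def by (simp add: mult.assoc)
    also have "\<dots> = (e1 * eu) * ub * (fu * f2)"
      by (simp add: ub(4) mult.assoc)
    finally show ?thesis .
  qed
  moreover have "idem (e1 * eu)" "idem (fu * f2)"
    using band[OF xb(2) ub(2)] band[OF ub(3) yb(2)] .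
  ultimately show ?thesis
    using ub(1) unfolding is_decomp_def by simp
qed

theorem theorem2p13:
  fixes S0 :: "'a::semigroup_mult set" and x y :: 'a
  assumes "quasi_adequate TYPE('a)"
    and "adequate_transversal S0"
    and "admissible S0"
  shows "ex S0 (x * y) = ex S0 x * ex S0 (bar S0 x * fx S0 x * ex S0 y * bar S0 y) \<and>
         fx S0 (x * y) = fx S0 (bar S0 x * fx S0 x * ex S0 y * bar S0 y) * fx S0 y"
proof -
  let ?u = "bar S0 x * fx S0 x * ex S0 y * bar S0 y"
  have band: "\<And>e f :: 'a. idem e \<Longrightarrow> idem f \<Longrightarrow> idem (e * f)"
    using assms(1) quasi_adequate_def by blast
  have adq: "adequate_in S0"
    using assms(2) adequate_transversal_def by blast
  have "is_decomp S0 (x * y) (bar S0 ?u, ex S0 x * ex S0 ?u, fx S0 ?u * fx S0 y)"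
    using is_decomp_mult[OF band adq] is_decomp_decomp[OF assms(2)] by blast
  then have "decomp S0 (x * y) = (bar S0 ?u, ex S0 x * ex S0 ?u, fx S0 ?u * fx S0 y)"
    using decomp_eqI[OF assms(2)] by blast
  then show ?thesis
    unfolding ex_def fx_def by simp
qed

end
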